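(* Let $B$ be the open unit disk. Assume $\Phi:\partial B\to\gamma\subset\mathbb R^2$ is a homeomorphism onto a simple closed curve $\gamma$, and let $U\in C^2(B;\mathbb R^2)\cap C(\overline B;\mathbb R^2)$ be the solution of $\Delta U=0$ in $B$, $U=\Phi$ on $\partial B$. If for every $P\in\partial B$ the mapping $U$ is a local homeomorphism at $P$, then there exists $\rho\in(0,1)$ such that $U$ is a diffeomorphism of $B\setminus\overline{B_\rho(0)}$ onto $U(B\setminus\overline{B_\rho(0)})$.
   Context: $U$ is a local homeomorphism at $P\in\overline B$ if there is a neighborhood $G$ of $P$ such that $U$ is one-to-one on $G\cap\overline B$. $B_\rho(0)$ denotes the open disk of radius $\rho$ centered at $0$. *)

theory Defs
  imports "HOL-Analysis.Analysis"
begin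

text \<open>The plane R^2 is identified with the type complex (a 2-dimensional euclidean space
  with Basis = {1, i}).\<close>

definition pderiv_dir :: "(complex \<Rightarrow> complex) \<Rightarrow> complex \<Rightarrow> complex \<Rightarrow> complex" where
  "pderiv_dir f v x = frechet_derivative f (at x) v"

definition C1_on :: "complex set \<Rightarrow> (complex \<Rightarrow> complex) \<Rightarrow> bool" where
  "C1_on S f \<longleftrightarrow> (\<forall>x\<in>S. f differentiable (at x)) \<and>
     (\<forall>v\<in>Basis. continuous_on S (pderiv_dir f v))"

definition C2_on :: "complex set \<Rightarrow> (complex \<Rightarrow> complex) \<Rightarrow> bool" where
  "C2_on S f \<longleftrightarrow> (\<forall>x\<in>S. f differentiable (at x)) \<and>
     (\<forall>v\<in>Basis. \<forall>x\<in>S. pderiv_dir f v differentiable (at x)) \<and>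
     (\<forall>v\<in>Basis. \<forall>w\<in>Basis. continuous_on S (pderiv_dir (pderiv_dir f v) w))"

definition laplacian :: "(complex \<Rightarrow> complex) \<Rightarrow> complex \<Rightarrow> complex" where
  "laplacian f x = (\<Sum>v\<in>Basis. pderiv_dir (pderiv_dir f v) v x)"

definition local_homeo_at :: "(complex \<Rightarrow> complex) \<Rightarrow> complex \<Rightarrow> bool" where
  "local_homeo_at U P \<longleftrightarrow> (\<exists>G. open G \<and> P \<in> G \<and> inj_on U (G \<inter> cball 0 1))"

definition diffeo_onto_image :: "(complex \<Rightarrow> complex) \<Rightarrow> complex set \<Rightarrow> bool" where
  "diffeo_onto_image U A \<longleftrightarrow> inj_on U A \<and> open (U ` A) \<and> C1_on A U \<and>
     C1_on (U ` A) (inv_into A U)"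

end

theory Submission
  imports Defs "HOL-Complex_Analysis.Complex_Analysis"
begin

text \<open>Near the boundary circle, \<open>U\<close> is injective: otherwise pairs of distinct points with equal images
  would accumulate at a boundary point, where \<open>U = \<Phi>\<close> is injective and \<open>U\<close> is locally injective.
  An injective harmonic map has nonvanishing Jacobian (Lewy): if the Jacobian vanished at \<open>z\<^sub>0\<close>, some
  component \<open>u = Re (\<beta> * U)\<close> would have a critical point there, so \<open>u - u(z\<^sub>0) = Re H\<close> with \<open>H\<close> holomorphic
  and \<open>H(z\<^sub>0) = H'(z\<^sub>0) = 0\<close>. Locally \<open>H = \<phi>\<^sup>n\<close> with \<open>n \<ge> 2\<close> and \<open>\<phi>\<close> injective, so the level set
  \<open>u = u(z\<^sub>0)\<close> contains three arcs meeting only at \<open>z\<^sub>0\<close>; on them \<open>Im (\<beta> * U)\<close> would be a continuous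
  injection into the real line, which is impossible. The inverse function theorem finishes the proof.\<close>

lemma linear_complex_decompose:
  fixes D :: "complex \<Rightarrow> 'b::real_vector"
  assumes "linear D"
  shows "D h = Re h *\<^sub>R D 1 + Im h *\<^sub>R D \<i>"
proof -
  have "h = Re h *\<^sub>R 1 + Im h *\<^sub>R \<i>" by (simp add: complex_eq_iff)
  then have "D h = D (Re h *\<^sub>R 1 + Im h *\<^sub>R \<i>)" by simp
  also have "\<dots> = Re h *\<^sub>R D 1 + Im h *\<^sub>R D \<i>"
    using assms by (simp add: linear_add linear_scale)
  finally show ?thesis .
qed

lemma has_derivative_pderiv_dir:
  assumes "f differentiable (at w)"
  shows "(f has_derivative (\<lambda>h. pderiv_dir f h w)) (at w)"
  using frechet_derivative_works[THEN iffD1, OF assms] by (simp add: pderiv_dir_def)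

lemma has_derivative_pderiv_dir_coords:
  assumes "f differentiable (at w)"
  shows "(f has_derivative (\<lambda>h. Re h *\<^sub>R pderiv_dir f 1 w + Im h *\<^sub>R pderiv_dir f \<i> w)) (at w)"
proof -
  have d: "(f has_derivative (\<lambda>h. pderiv_dir f h w)) (at w)"
    by (rule has_derivative_pderiv_dir[OF assms])
  have "(\<lambda>h. pderiv_dir f h w) = (\<lambda>h. Re h *\<^sub>R pderiv_dir f 1 w + Im h *\<^sub>R pderiv_dir f \<i> w)"
    by (rule ext) (rule linear_complex_decompose[OF has_derivative_linear[OF d]])
  with d show ?thesis by (simp only:)
qed

lemma has_derivative_Re_mult:
  assumes "(f has_derivative D) F"
  shows "((\<lambda>w. Re (\<beta> * f w)) has_derivative (\<lambda>h. Re (\<beta> * D h))) F"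
  using bounded_linear.has_derivative[OF bounded_linear_Re has_derivative_mult_right[OF assms]] .

lemma has_derivative_Re_mult_coords:
  assumes "(f has_derivative (\<lambda>h. Re h *\<^sub>R fx + Im h *\<^sub>R fy)) F"
  shows "((\<lambda>w. Re (\<beta> * f w)) has_derivative (\<lambda>h. Re h * Re (\<beta> * fx) + Im h * Re (\<beta> * fy))) F"
  using has_derivative_Re_mult[OF assms, of \<beta>] by (simp add: scaleR_conv_of_real algebra_simps)

lemma has_real_derivative_along_line:
  fixes f :: "complex \<Rightarrow> real"
  assumes "(f has_derivative D) (at (a + of_real s * d))"
  shows "((\<lambda>t. f (a + of_real t * d)) has_real_derivative D d) (at s)"
proof -
  have "((\<lambda>t. a + of_real t * d) has_derivative (\<lambda>t. of_real t * d)) (at s)"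
    by (auto intro!: derivative_eq_intros)
  from has_derivative_compose[OF this assms]
  have "((\<lambda>t. f (a + of_real t * d)) has_derivative (\<lambda>t. D (of_real t * d))) (at s)"
    by (simp add: o_def)
  moreover have "(\<lambda>t. D (of_real t * d)) = (*) (D d)"
  proof
    fix t
    show "D (of_real t * d) = D d * t"
      using linear_scale[OF has_derivative_linear[OF assms], of t d] by (simp add: scaleR_conv_of_real)
  qed
  ultimately show ?thesis by (simp add: has_field_derivative_def)
qed

lemma second_difference_mean_value:
  fixes g g1 g12 :: "real \<Rightarrow> real \<Rightarrow> real"
  assumes h: "0 < h"
    and d1: "\<And>s t. \<lbrakk>0 \<le> s; s \<le> h; 0 \<le> t; t \<le> h\<rbrakk> \<Longrightarrow> ((\<lambda>s. g s t) has_real_derivative g1 s t) (at s)"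
    and d12: "\<And>s t. \<lbrakk>0 \<le> s; s \<le> h; 0 \<le> t; t \<le> h\<rbrakk> \<Longrightarrow> ((\<lambda>t. g1 s t) has_real_derivative g12 s t) (at t)"
  obtains \<xi> \<eta> where "0 < \<xi>" "\<xi> < h" "0 < \<eta>" "\<eta> < h"
    "g h h - g 0 h - g h 0 + g 0 0 = h\<^sup>2 * g12 \<xi> \<eta>"
proof -
  have "((\<lambda>s. g s h - g s 0) has_real_derivative g1 s h - g1 s 0) (at s)" if "0 \<le> s" "s \<le> h" for s
    using that h by (intro DERIV_diff d1) auto
  then obtain \<xi> where \<xi>: "0 < \<xi>" "\<xi> < h"
    "(g h h - g h 0) - (g 0 h - g 0 0) = (h - 0) * (g1 \<xi> h - g1 \<xi> 0)"
    using MVT2[OF h, of "\<lambda>s. g s h - g s 0" "\<lambda>s. g1 s h - g1 s 0"] by blast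
  have "((\<lambda>t. g1 \<xi> t) has_real_derivative g12 \<xi> t) (at t)" if "0 \<le> t" "t \<le> h" for t
    using that \<xi> by (intro d12) auto
  then obtain \<eta> where \<eta>: "0 < \<eta>" "\<eta> < h" "g1 \<xi> h - g1 \<xi> 0 = (h - 0) * g12 \<xi> \<eta>"
    using MVT2[OF h, of "g1 \<xi>" "g12 \<xi>"] by blast
  show thesis
    by (rule that[OF \<xi>(1,2) \<eta>(1,2)]) (use \<xi>(3) \<eta>(3) in \<open>simp add: power2_eq_square algebra_simps\<close>)
qed

lemma mixed_partials_meet_in_square:
  fixes v vx vy :: "complex \<Rightarrow> real" and Dx Dy :: "complex \<Rightarrow> complex \<Rightarrow> real" and z :: complex
  defines "P s t \<equiv> z + of_real s + of_real t * \<i>"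
  assumes h: "0 < h" and square: "\<And>s t. \<lbrakk>0 \<le> s; s \<le> h; 0 \<le> t; t \<le> h\<rbrakk> \<Longrightarrow> P s t \<in> S"
    and dv: "\<And>w. w \<in> S \<Longrightarrow> (v has_derivative (\<lambda>h. Re h * vx w + Im h * vy w)) (at w)"
    and dx: "\<And>w. w \<in> S \<Longrightarrow> (vx has_derivative Dx w) (at w)"
    and dy: "\<And>w. w \<in> S \<Longrightarrow> (vy has_derivative Dy w) (at w)"
  obtains \<xi> \<eta> \<xi>' \<eta>' where "0 < \<xi>" "\<xi> < h" "0 < \<eta>" "\<eta> < h" "0 < \<xi>'" "\<xi>' < h" "0 < \<eta>'" "\<eta>' < h"
    "Dx (P \<xi> \<eta>) \<i> = Dy (P \<xi>' \<eta>') 1"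
proof -
  have along_x: "((\<lambda>s. f (P s t)) has_real_derivative D 1) (at s)"
    if "(f has_derivative D) (at (P s t))" for f :: "complex \<Rightarrow> real" and D s t
    using has_real_derivative_along_line[of f D "z + of_real t * \<i>" s 1] that
    by (simp add: P_def algebra_simps)
  have along_y: "((\<lambda>t. f (P s t)) has_real_derivative D \<i>) (at t)"
    if "(f has_derivative D) (at (P s t))" for f :: "complex \<Rightarrow> real" and D s t
    using has_real_derivative_along_line[of f D "z + of_real s" t \<i>] that
    by (simp add: P_def algebra_simps)
  have vx_deriv: "((\<lambda>s. v (P s t)) has_real_derivative vx (P s t)) (at s)"
    and vy_deriv: "((\<lambda>t. v (P s t)) has_real_derivative vy (P s t)) (at t)"
    and Dx_deriv: "((\<lambda>t. vx (P s t)) has_real_derivative Dx (P s t) \<i>) (at t)"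
    and Dy_deriv: "((\<lambda>s. vy (P s t)) has_real_derivative Dy (P s t) 1) (at s)"
    if "0 \<le> s" "s \<le> h" "0 \<le> t" "t \<le> h" for s t
    using along_x[OF dv[OF square[OF that]]] along_y[OF dv[OF square[OF that]]]
      along_y[OF dx[OF square[OF that]]] along_x[OF dy[OF square[OF that]]] by simp_all
  \<comment> \<open>The second difference of \<open>v\<close> over the square, computed in both orders.\<close>
  obtain \<xi> \<eta> where xy: "0 < \<xi>" "\<xi> < h" "0 < \<eta>" "\<eta> < h"
    "v (P h h) - v (P 0 h) - v (P h 0) + v (P 0 0) = h\<^sup>2 * Dx (P \<xi> \<eta>) \<i>"
    by (rule second_difference_mean_value[of h "\<lambda>s t. v (P s t)" "\<lambda>s t. vx (P s t)"
          "\<lambda>s t. Dx (P s t) \<i>", OF h vx_deriv Dx_deriv])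
  obtain \<eta>' \<xi>' where yx: "0 < \<eta>'" "\<eta>' < h" "0 < \<xi>'" "\<xi>' < h"
    "v (P h h) - v (P h 0) - v (P 0 h) + v (P 0 0) = h\<^sup>2 * Dy (P \<xi>' \<eta>') 1"
    by (rule second_difference_mean_value[of h "\<lambda>t s. v (P s t)" "\<lambda>t s. vy (P s t)"
          "\<lambda>t s. Dy (P s t) 1", OF h vy_deriv Dy_deriv])
  have "h\<^sup>2 * Dx (P \<xi> \<eta>) \<i> = h\<^sup>2 * Dy (P \<xi>' \<eta>') 1"
    using xy(5) yx(5) by linarith
  then show thesis
    using that[OF xy(1-4) yx(3,4,1,2)] h by simp
qed

lemma mixed_partials_eq:
  fixes v vx vy :: "complex \<Rightarrow> real" and Dx Dy :: "complex \<Rightarrow> complex \<Rightarrow> real"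
  assumes S: "open S" "z \<in> S"
    and dv: "\<And>w. w \<in> S \<Longrightarrow> (v has_derivative (\<lambda>h. Re h * vx w + Im h * vy w)) (at w)"
    and dx: "\<And>w. w \<in> S \<Longrightarrow> (vx has_derivative Dx w) (at w)"
    and dy: "\<And>w. w \<in> S \<Longrightarrow> (vy has_derivative Dy w) (at w)"
    and cx: "continuous_on S (\<lambda>w. Dx w \<i>)" and cy: "continuous_on S (\<lambda>w. Dy w 1)"
  shows "Dx z \<i> = Dy z 1"
proof (rule ccontr)
  assume ne: "Dx z \<i> \<noteq> Dy z 1"
  define e where "e = dist (Dx z \<i>) (Dy z 1) / 2"
  have e: "e > 0" using ne by (simp add: e_def)
  obtain d1 where d1: "d1 > 0" "\<And>w. w \<in> S \<Longrightarrow> dist w z < d1 \<Longrightarrow> dist (Dx w \<i>) (Dx z \<i>) < e"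
    using cx S(2) e unfolding continuous_on_iff by blast
  obtain d2 where d2: "d2 > 0" "\<And>w. w \<in> S \<Longrightarrow> dist w z < d2 \<Longrightarrow> dist (Dy w 1) (Dy z 1) < e"
    using cy S(2) e unfolding continuous_on_iff by blast
  obtain d3 where d3: "d3 > 0" "ball z d3 \<subseteq> S"
    using S openE by blast
  define h where "h = min d1 (min d2 d3) / 3"
  have h: "h > 0" using d1 d2 d3 by (simp add: h_def)
  define P where "P s t = z + of_real s + of_real t * \<i>" for s t
  have P_close: "dist (P s t) z < min d1 (min d2 d3)" if "0 \<le> s" "s \<le> h" "0 \<le> t" "t \<le> h" for s t
  proof -
    have "dist (P s t) z \<le> \<bar>s\<bar> + \<bar>t\<bar>"
      unfolding P_def dist_norm using norm_triangle_ineq[of "of_real s" "of_real t * \<i>"] by (simp add: norm_mult)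
    then show ?thesis using that h unfolding h_def by linarith
  qed
  have P_in: "P s t \<in> S" if "0 \<le> s" "s \<le> h" "0 \<le> t" "t \<le> h" for s t
    using P_close[OF that] d3 by (auto simp: dist_commute)
  obtain \<xi> \<eta> \<xi>' \<eta>' where xy: "0 < \<xi>" "\<xi> < h" "0 < \<eta>" "\<eta> < h"
    and yx: "0 < \<xi>'" "\<xi>' < h" "0 < \<eta>'" "\<eta>' < h" and eq: "Dx (P \<xi> \<eta>) \<i> = Dy (P \<xi>' \<eta>') 1"
    using mixed_partials_meet_in_square[OF h P_in[unfolded P_def] dv dx dy] unfolding P_def by blast
  have "dist (Dx z \<i>) (Dx (P \<xi> \<eta>) \<i>) < e"
    using d1(2)[OF P_in] P_close xy by (auto simp: dist_commute)
  moreover have "dist (Dy z 1) (Dx (P \<xi> \<eta>) \<i>) < e"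
    using d2(2)[OF P_in] P_close yx eq by (auto simp: dist_commute)
  ultimately have "dist (Dx z \<i>) (Dy z 1) < e + e"
    by (rule dist_triangle_less_add)
  then show False unfolding e_def by linarith
qed

lemma laplacian_complex:
  "laplacian f z = pderiv_dir (pderiv_dir f 1) 1 z + pderiv_dir (pderiv_dir f \<i>) \<i> z"
proof -
  have "(1::complex) \<noteq> \<i>" by (simp add: complex_eq_iff)
  then show ?thesis unfolding laplacian_def Basis_complex_def by simp
qed

lemma C2_on_subset: "C2_on S f \<Longrightarrow> T \<subseteq> S \<Longrightarrow> C2_on T f"
  unfolding C2_on_def by (meson continuous_on_subset subsetD)

lemma C2_on_imp_C1_on:
  assumes "C2_on S f"
  shows "C1_on S f"
  unfolding C1_on_def
proof (intro conjI ballI)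
  show "f differentiable (at x)" if "x \<in> S" for x
    using assms that unfolding C2_on_def by blast
  show "continuous_on S (pderiv_dir f v)" if "v \<in> Basis" for v
    using assms that unfolding C2_on_def
    by (metis continuous_at_imp_continuous_on differentiable_imp_continuous_within)
qed

lemma C2_on_pderiv_differentiable:
  "C2_on S f \<Longrightarrow> v \<in> Basis \<Longrightarrow> w \<in> S \<Longrightarrow> pderiv_dir f v differentiable (at w)"
  unfolding C2_on_def by blast

lemma C2_on_mixed_pderiv_eq:
  assumes S: "open S" "z \<in> S" and f: "C2_on S f"
  shows "pderiv_dir (pderiv_dir f 1) \<i> z = pderiv_dir (pderiv_dir f \<i>) 1 z"
proof -
  have basis: "(1::complex) \<in> Basis" "\<i> \<in> Basis" by (simp_all add: Basis_complex_def)
  have Re_eq: "Re (\<beta> * pderiv_dir (pderiv_dir f 1) \<i> z) = Re (\<beta> * pderiv_dir (pderiv_dir f \<i>) 1 z)" for \<beta>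
  proof -
    have "((\<lambda>w. Re (\<beta> * f w)) has_derivative
        (\<lambda>h. Re h * Re (\<beta> * pderiv_dir f 1 w) + Im h * Re (\<beta> * pderiv_dir f \<i> w))) (at w)"
      if "w \<in> S" for w
      using f that unfolding C2_on_def
      by (blast intro: has_derivative_Re_mult_coords has_derivative_pderiv_dir_coords)
    moreover have "((\<lambda>w. Re (\<beta> * pderiv_dir f v w)) has_derivative
        (\<lambda>h. Re (\<beta> * pderiv_dir (pderiv_dir f v) h w))) (at w)"
      if "v \<in> Basis" "w \<in> S" for v w
      by (rule has_derivative_Re_mult[OF has_derivative_pderiv_dir[OF C2_on_pderiv_differentiable[OF f that]]])
    moreover have "continuous_on S (\<lambda>w. Re (\<beta> * pderiv_dir (pderiv_dir f v) u w))"
      if "v \<in> Basis" "u \<in> Basis" for v u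
      using f that unfolding C2_on_def by (intro continuous_intros) blast
    ultimately show ?thesis
      using basis by (intro mixed_partials_eq[OF S]) auto
  qed
  show ?thesis
    using Re_eq[of 1] Re_eq[of "-\<i>"] by (simp add: complex_eq_iff)
qed

lemma cauchy_riemann_linear:
  fixes a b :: real
  shows "of_real (Re h * a + Im h * b) - \<i> * of_real (Re h * b + Im h * - a) = (of_real a - \<i> * of_real b) * h"
  by (simp add: complex_eq_iff algebra_simps)

lemma harmonic_gradient_holomorphic:
  assumes S: "open S" and f: "C2_on S f" and harmonic: "\<forall>w\<in>S. laplacian f w = 0"
  shows "(\<lambda>w. of_real (Re (\<beta> * pderiv_dir f 1 w)) - \<i> * of_real (Re (\<beta> * pderiv_dir f \<i> w)))
    holomorphic_on S"
proof (rule holomorphic_onI)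
  fix w assume w: "w \<in> S"
  let ?fxx = "pderiv_dir (pderiv_dir f 1) 1 w" and ?fxy = "pderiv_dir (pderiv_dir f 1) \<i> w"
  let ?fyx = "pderiv_dir (pderiv_dir f \<i>) 1 w" and ?fyy = "pderiv_dir (pderiv_dir f \<i>) \<i> w"
  have basis: "(1::complex) \<in> Basis" "\<i> \<in> Basis" by (simp_all add: Basis_complex_def)
  have "((\<lambda>w. Re (\<beta> * pderiv_dir f v w)) has_derivative
      (\<lambda>h. Re h * Re (\<beta> * pderiv_dir (pderiv_dir f v) 1 w) + Im h * Re (\<beta> * pderiv_dir (pderiv_dir f v) \<i> w)))
      (at w)" if "v \<in> Basis" for v
    by (intro has_derivative_Re_mult_coords has_derivative_pderiv_dir_coords
        C2_on_pderiv_differentiable[OF f that w])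
  from bounded_linear.has_derivative[OF bounded_linear_of_real this]
  have d: "((\<lambda>w. of_real (Re (\<beta> * pderiv_dir f v w))) has_derivative
      (\<lambda>h. of_real (Re h * Re (\<beta> * pderiv_dir (pderiv_dir f v) 1 w)
        + Im h * Re (\<beta> * pderiv_dir (pderiv_dir f v) \<i> w)))) (at w)" if "v \<in> Basis" for v
    using that by blast
  have D: "((\<lambda>w. of_real (Re (\<beta> * pderiv_dir f 1 w)) - \<i> * of_real (Re (\<beta> * pderiv_dir f \<i> w)))
      has_derivative (\<lambda>h. of_real (Re h * Re (\<beta> * ?fxx) + Im h * Re (\<beta> * ?fxy))
        - \<i> * of_real (Re h * Re (\<beta> * ?fyx) + Im h * Re (\<beta> * ?fyy)))) (at w)"
    by (rule has_derivative_diff[OF d[OF basis(1)] has_derivative_mult_right[OF d[OF basis(2)]]])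
  have sym: "Re (\<beta> * ?fyx) = Re (\<beta> * ?fxy)" using C2_on_mixed_pderiv_eq[OF S w f] by simp
  have "?fyy = - ?fxx"
    using harmonic w laplacian_complex[of f w] by (simp add: eq_neg_iff_add_eq_0 add.commute)
  then have harm: "Re (\<beta> * ?fyy) = - Re (\<beta> * ?fxx)" by simp
  have "(\<lambda>h. of_real (Re h * Re (\<beta> * ?fxx) + Im h * Re (\<beta> * ?fxy))
        - \<i> * of_real (Re h * Re (\<beta> * ?fyx) + Im h * Re (\<beta> * ?fyy)))
      = (*) (of_real (Re (\<beta> * ?fxx)) - \<i> * of_real (Re (\<beta> * ?fxy)))"
    unfolding sym harm by (rule ext) (rule cauchy_riemann_linear)
  with D have "((\<lambda>w. of_real (Re (\<beta> * pderiv_dir f 1 w)) - \<i> * of_real (Re (\<beta> * pderiv_dir f \<i> w)))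
      has_derivative (*) (of_real (Re (\<beta> * ?fxx)) - \<i> * of_real (Re (\<beta> * ?fxy)))) (at w)"
    by (simp only:)
  then show "(\<lambda>w. of_real (Re (\<beta> * pderiv_dir f 1 w)) - \<i> * of_real (Re (\<beta> * pderiv_dir f \<i> w)))
      field_differentiable at w within S"
    unfolding field_differentiable_def has_field_derivative_def[symmetric]
    by (blast intro: has_field_derivative_at_within)
qed

lemma harmonic_locally_Re_holomorphic:
  assumes S: "open S" "z0 \<in> S" and f: "C2_on S f" and harmonic: "\<forall>w\<in>S. laplacian f w = 0"
  obtains r H where "r > 0" "ball z0 r \<subseteq> S" "H holomorphic_on ball z0 r" "H z0 = 0"
    "(H has_field_derivative
       of_real (Re (\<beta> * pderiv_dir f 1 z0)) - \<i> * of_real (Re (\<beta> * pderiv_dir f \<i> z0))) (at z0)"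
    "\<And>w. w \<in> ball z0 r \<Longrightarrow> Re (H w) = Re (\<beta> * f w) - Re (\<beta> * f z0)"
proof -
  define g where "g w = of_real (Re (\<beta> * pderiv_dir f 1 w)) - \<i> * of_real (Re (\<beta> * pderiv_dir f \<i> w))" for w
  obtain r where r: "r > 0" "ball z0 r \<subseteq> S" using S openE by blast
  have z0: "z0 \<in> ball z0 r" using r by simp
  have "g holomorphic_on ball z0 r"
    using holomorphic_on_subset[OF harmonic_gradient_holomorphic[OF S(1) f harmonic] r(2)]
    unfolding g_def .
  then obtain F where F: "\<And>w. w \<in> ball z0 r \<Longrightarrow> (F has_field_derivative g w) (at w within ball z0 r)"
    using holomorphic_convex_primitive'[OF convex_ball open_ball] by blast
  define H where "H w = F w - F z0" for w
  have H: "(H has_field_derivative g w) (at w)" if "w \<in> ball z0 r" for w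
    using DERIV_diff[OF F[OF that] DERIV_const[of "F z0"]] at_within_open[OF that open_ball]
    unfolding H_def[abs_def] by simp
  have "((\<lambda>w. Re (H w) - Re (\<beta> * f w)) has_derivative (\<lambda>h. 0)) (at w within ball z0 r)"
    if w: "w \<in> ball z0 r" for w
  proof -
    have "((\<lambda>w. Re (H w) - Re (\<beta> * f w)) has_derivative
        (\<lambda>h. Re (g w * h) - (Re h * Re (\<beta> * pderiv_dir f 1 w) + Im h * Re (\<beta> * pderiv_dir f \<i> w)))) (at w)"
    proof (rule has_derivative_diff)
      show "((\<lambda>w. Re (H w)) has_derivative (\<lambda>h. Re (g w * h))) (at w)"
        using bounded_linear.has_derivative[OF bounded_linear_Re H[OF w, unfolded has_field_derivative_def]] .
      have "f differentiable (at w)" using f w r(2) unfolding C2_on_def by blast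
      then show "((\<lambda>w. Re (\<beta> * f w)) has_derivative
          (\<lambda>h. Re h * Re (\<beta> * pderiv_dir f 1 w) + Im h * Re (\<beta> * pderiv_dir f \<i> w))) (at w)"
        by (intro has_derivative_Re_mult_coords has_derivative_pderiv_dir_coords)
    qed
    then show ?thesis by (simp add: g_def algebra_simps has_derivative_at_withinI)
  qed
  from has_derivative_zero_constant[OF convex_ball this]
  obtain C where C: "\<And>w. w \<in> ball z0 r \<Longrightarrow> Re (H w) - Re (\<beta> * f w) = C"
    by blast
  show thesis
  proof (rule that[OF r])
    show "H holomorphic_on ball z0 r" using H unfolding holomorphic_on_open[OF open_ball] by blast
    show "(H has_field_derivative
        of_real (Re (\<beta> * pderiv_dir f 1 z0)) - \<i> * of_real (Re (\<beta> * pderiv_dir f \<i> z0))) (at z0)"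
      using H[OF z0] by (simp add: g_def)
    show "Re (H w) = Re (\<beta> * f w) - Re (\<beta> * f z0)" if "w \<in> ball z0 r" for w
      using C[OF that] C[OF z0] by (simp add: H_def)
  qed (simp add: H_def)
qed

definition triod :: "'a::topological_space set \<Rightarrow> 'a set \<Rightarrow> 'a set \<Rightarrow> 'a \<Rightarrow> bool" where
  "triod S1 S2 S3 z \<longleftrightarrow> (\<forall>S\<in>{S1, S2, S3}. connected S \<and> z \<in> S \<and> (\<exists>a\<in>S. a \<noteq> z)) \<and>
     S1 \<inter> S2 = {z} \<and> S1 \<inter> S3 = {z} \<and> S2 \<inter> S3 = {z}"

lemma connected_real_common_point_same_side:
  fixes I J :: "real set"
  assumes "connected I" "connected J" "p \<in> I" "p \<in> J" "a \<in> I" "b \<in> J"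
    and "(p < a \<and> p < b) \<or> (a < p \<and> b < p)"
  obtains x where "x \<noteq> p" "x \<in> I" "x \<in> J"
proof -
  from assms(7) consider "p < a" "p < b" | "a < p" "b < p" by blast
  then show thesis
  proof cases
    case 1
    then have "min a b \<in> I" "min a b \<in> J"
      using connected_contains_Icc[OF assms(1,3,5)] connected_contains_Icc[OF assms(2,4,6)] by auto
    with 1 show thesis by (intro that[of "min a b"]) auto
  next
    case 2
    then have "max a b \<in> I" "max a b \<in> J"
      using connected_contains_Icc[OF assms(1,5,3)] connected_contains_Icc[OF assms(2,6,4)] by auto
    with 2 show thesis by (intro that[of "max a b"]) auto
  qed
qed

lemma inj_real_on_two_arms_opposite_sides:
  fixes \<tau> :: "'a::topological_space \<Rightarrow> real"
  assumes S: "connected S" "connected S'" "S \<inter> S' = {z}"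
    and cont: "continuous_on (S \<union> S') \<tau>" and inj: "inj_on \<tau> (S \<union> S')" and ab: "a \<in> S" "b \<in> S'"
  shows "\<not> (\<tau> z < \<tau> a \<and> \<tau> z < \<tau> b \<or> \<tau> a < \<tau> z \<and> \<tau> b < \<tau> z)"
proof
  assume side: "\<tau> z < \<tau> a \<and> \<tau> z < \<tau> b \<or> \<tau> a < \<tau> z \<and> \<tau> b < \<tau> z"
  have z: "z \<in> S" "z \<in> S'" using S(3) by auto
  have "connected (\<tau> ` S)" "connected (\<tau> ` S')"
    using S(1,2) cont by (auto intro: connected_continuous_image continuous_on_subset)
  then obtain x where x: "x \<noteq> \<tau> z" "x \<in> \<tau> ` S" "x \<in> \<tau> ` S'"
    by (rule connected_real_common_point_same_side[OF _ _
          imageI[OF z(1)] imageI[OF z(2)] imageI[OF ab(1)] imageI[OF ab(2)] side])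
  then obtain y y' where y: "y \<in> S" "y' \<in> S'" "x = \<tau> y" "x = \<tau> y'" by auto
  then have "y = y'" using inj by (auto dest: inj_onD)
  with y S(3) x(1) show False by (metis IntI singletonD)
qed

lemma triod_not_inj_real:
  fixes \<tau> :: "'a::topological_space \<Rightarrow> real"
  assumes T: "triod S1 S2 S3 z"
    and cont: "continuous_on (S1 \<union> S2 \<union> S3) \<tau>" and inj: "inj_on \<tau> (S1 \<union> S2 \<union> S3)"
  shows False
proof -
  have arms: "connected S1" "connected S2" "connected S3" "S1 \<inter> S2 = {z}" "S1 \<inter> S3 = {z}" "S2 \<inter> S3 = {z}"
    and z: "z \<in> S1 \<union> S2 \<union> S3"
    using T unfolding triod_def by auto
  obtain a1 a2 a3 where a: "a1 \<in> S1" "a2 \<in> S2" "a3 \<in> S3" "a1 \<noteq> z" "a2 \<noteq> z" "a3 \<noteq> z"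
    using T unfolding triod_def by auto
  have "\<tau> a \<noteq> \<tau> z" if "a \<in> S1 \<union> S2 \<union> S3" "a \<noteq> z" for a
    using inj_onD[OF inj _ that(1) z] that(2) by blast
  then have "\<tau> a1 \<noteq> \<tau> z" "\<tau> a2 \<noteq> \<tau> z" "\<tau> a3 \<noteq> \<tau> z"
    using a by blast+
  moreover have "\<not> (\<tau> z < \<tau> a \<and> \<tau> z < \<tau> b \<or> \<tau> a < \<tau> z \<and> \<tau> b < \<tau> z)"
    if "S \<in> {S1, S2, S3}" "S' \<in> {S1, S2, S3}" "connected S" "connected S'" "S \<inter> S' = {z}" "a \<in> S" "b \<in> S'"
    for S S' a b
    using that cont inj
    by (intro inj_real_on_two_arms_opposite_sides) (auto intro: continuous_on_subset inj_on_subset)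
  from this[of S1 S2 a1 a2] this[of S1 S3 a1 a3] this[of S2 S3 a2 a3]
  have "\<not> (\<tau> z < \<tau> a1 \<and> \<tau> z < \<tau> a2 \<or> \<tau> a1 < \<tau> z \<and> \<tau> a2 < \<tau> z)"
    "\<not> (\<tau> z < \<tau> a1 \<and> \<tau> z < \<tau> a3 \<or> \<tau> a1 < \<tau> z \<and> \<tau> a3 < \<tau> z)"
    "\<not> (\<tau> z < \<tau> a2 \<and> \<tau> z < \<tau> a3 \<or> \<tau> a2 < \<tau> z \<and> \<tau> a3 < \<tau> z)"
    using arms a by auto
  ultimately show False by linarith
qed

lemma closed_segments_unit_Int:
  fixes a b :: complex
  assumes "norm a = 1" "norm b = 1" "a \<noteq> b" "d > 0"
  shows "closed_segment 0 (d *\<^sub>R a) \<inter> closed_segment 0 (d *\<^sub>R b) = {0}"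
proof -
  have "x = 0" if x: "x \<in> closed_segment 0 (d *\<^sub>R a)" "x \<in> closed_segment 0 (d *\<^sub>R b)" for x
  proof -
    obtain u where u: "0 \<le> u" "x = (u * d) *\<^sub>R a"
      using x(1) by (auto simp: closed_segment_def)
    obtain v where v: "0 \<le> v" "x = (v * d) *\<^sub>R b"
      using x(2) by (auto simp: closed_segment_def)
    have "norm x = u * d" using u assms(1,4) by simp
    moreover have "norm x = v * d" using v assms(2,4) by simp
    ultimately have "u * d = v * d" by linarith
    then have "(u * d) *\<^sub>R a = (u * d) *\<^sub>R b" using u(2) v(2) by metis
    then show "x = 0" using assms(3) u(2) by auto
  qed
  then show ?thesis by auto
qed

lemma connected_inj_preimage:
  fixes \<phi> :: "'a::euclidean_space \<Rightarrow> 'a"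
  assumes "open B" "continuous_on B \<phi>" "inj_on \<phi> B" "connected T" "T \<subseteq> \<phi> ` B"
  shows "connected (B \<inter> \<phi> -` T)"
proof -
  obtain \<psi> where \<psi>: "homeomorphism B (\<phi> ` B) \<phi> \<psi>"
    using invariance_of_domain_homeomorphism[OF assms(1-2) _ assms(3)] by auto
  have "B \<inter> \<phi> -` T = \<psi> ` T"
  proof
    show "B \<inter> \<phi> -` T \<subseteq> \<psi> ` T"
      using homeomorphism_apply1[OF \<psi>] by (metis IntE image_eqI subsetI vimageE)
    show "\<psi> ` T \<subseteq> B \<inter> \<phi> -` T"
    proof
      fix x assume "x \<in> \<psi> ` T"
      then obtain y where y: "y \<in> T" "x = \<psi> y" by blast
      then have "y \<in> \<phi> ` B" using assms(5) by blast
      then show "x \<in> B \<inter> \<phi> -` T"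
        using y homeomorphism_apply2[OF \<psi>] homeomorphism_image2[OF \<psi>] by auto
    qed
  qed
  moreover have "continuous_on T \<psi>"
    using homeomorphism_cont2[OF \<psi>] assms(5) by (rule continuous_on_subset)
  ultimately show ?thesis using connected_continuous_image[OF _ assms(4)] by simp
qed

lemma inj_preimage_segments_triod:
  fixes \<phi> :: "complex \<Rightarrow> complex"
  assumes B: "open B" "z \<in> B" and \<phi>: "continuous_on B \<phi>" "inj_on \<phi> B" "\<phi> z = 0"
  obtains d where "d > 0"
    "\<And>\<zeta>1 \<zeta>2 \<zeta>3. \<lbrakk>norm \<zeta>1 = 1; norm \<zeta>2 = 1; norm \<zeta>3 = 1; \<zeta>1 \<noteq> \<zeta>2; \<zeta>1 \<noteq> \<zeta>3; \<zeta>2 \<noteq> \<zeta>3\<rbrakk> \<Longrightarrow>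
      triod (B \<inter> \<phi> -` closed_segment 0 (d *\<^sub>R \<zeta>1)) (B \<inter> \<phi> -` closed_segment 0 (d *\<^sub>R \<zeta>2))
        (B \<inter> \<phi> -` closed_segment 0 (d *\<^sub>R \<zeta>3)) z"
proof -
  have "0 \<in> \<phi> ` B" using B \<phi>(3) by force
  then obtain e where e: "e > 0" "ball 0 e \<subseteq> \<phi> ` B"
    using invariance_of_domain[OF \<phi>(1) B(1) \<phi>(2)] openE by blast
  define d where "d = e / 2"
  define S where "S \<zeta> = B \<inter> \<phi> -` closed_segment 0 (d *\<^sub>R \<zeta>)" for \<zeta>
  have d: "d > 0" using e by (simp add: d_def)
  have seg: "closed_segment 0 (d *\<^sub>R \<zeta>) \<subseteq> \<phi> ` B" if "norm \<zeta> = 1" for \<zeta>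
  proof -
    have "d *\<^sub>R \<zeta> \<in> ball 0 e" using that e by (simp add: d_def)
    then have "closed_segment 0 (d *\<^sub>R \<zeta>) \<subseteq> ball 0 e"
      using e(1) by (intro closed_segment_subset) auto
    then show ?thesis using e(2) by blast
  qed
  have arm: "connected (S \<zeta>) \<and> z \<in> S \<zeta> \<and> (\<exists>a\<in>S \<zeta>. a \<noteq> z)" if "norm \<zeta> = 1" for \<zeta>
  proof (intro conjI)
    show "connected (S \<zeta>)"
      unfolding S_def by (rule connected_inj_preimage[OF B(1) \<phi>(1,2) connected_segment seg[OF that]])
    show "z \<in> S \<zeta>" using B \<phi>(3) by (simp add: S_def)
    have "d *\<^sub>R \<zeta> \<in> closed_segment 0 (d *\<^sub>R \<zeta>)" "d *\<^sub>R \<zeta> \<noteq> 0"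
      using d that by auto
    then show "\<exists>a\<in>S \<zeta>. a \<noteq> z"
      using seg[OF that] \<phi>(3) unfolding S_def by force
  qed
  have meet: "S \<zeta> \<inter> S \<zeta>' = {z}" if "norm \<zeta> = 1" "norm \<zeta>' = 1" "\<zeta> \<noteq> \<zeta>'" for \<zeta> \<zeta>'
  proof -
    have "S \<zeta> \<inter> S \<zeta>' = B \<inter> \<phi> -` {0}"
      using closed_segments_unit_Int[OF that d] unfolding S_def by auto
    also have "\<dots> = {z}" using B(2) \<phi>(2,3) by (auto simp: inj_on_def)
    finally show ?thesis .
  qed
  show thesis
    by (rule that[OF d]) (use arm meet in \<open>simp add: triod_def S_def[symmetric]\<close>)
qed

lemma three_unit_vectors_power_Re_zero:
  assumes "2 \<le> n"
  obtains \<zeta>1 \<zeta>2 \<zeta>3 :: complex where "norm \<zeta>1 = 1" "norm \<zeta>2 = 1" "norm \<zeta>3 = 1"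
    "\<zeta>1 \<noteq> \<zeta>2" "\<zeta>1 \<noteq> \<zeta>3" "\<zeta>2 \<noteq> \<zeta>3" "Re (\<zeta>1 ^ n) = 0" "Re (\<zeta>2 ^ n) = 0" "Re (\<zeta>3 ^ n) = 0"
proof -
  \<comment> \<open>Any three roots of \<open>\<zeta>\<^sup>2\<^sup>n = -1\<close> will do: they are unit vectors with \<open>\<zeta>\<^sup>n = \<plusminus>\<i>\<close>.\<close>
  define R where "R = {\<zeta>::complex. \<zeta> ^ (2 * n) = -1}"
  have "card R = 2 * n" unfolding R_def using assms by (intro card_nth_roots) auto
  then obtain T where "T \<subseteq> R" "card T = 3"
    using assms obtain_subset_with_card_n[of 3 R] by auto
  then obtain \<zeta>1 \<zeta>2 \<zeta>3 where T: "{\<zeta>1, \<zeta>2, \<zeta>3} \<subseteq> R" "\<zeta>1 \<noteq> \<zeta>2" "\<zeta>1 \<noteq> \<zeta>3" "\<zeta>2 \<noteq> \<zeta>3"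
    by (auto simp: card_3_iff)
  have root: "norm \<zeta> = 1 \<and> Re (\<zeta> ^ n) = 0" if "\<zeta> \<in> R" for \<zeta>
  proof
    have "norm \<zeta> ^ (2 * n) = 1" using that by (simp add: R_def flip: norm_power)
    then show "norm \<zeta> = 1" using power_eq_1_iff[of "norm \<zeta>" "2 * n"] assms by simp
    have "(\<zeta> ^ n - \<i>) * (\<zeta> ^ n + \<i>) = 0"
      using that by (simp add: R_def algebra_simps power_mult flip: power2_eq_square)
    then have "\<zeta> ^ n = \<i> \<or> \<zeta> ^ n = - \<i>" by (simp add: eq_neg_iff_add_eq_0)
    then show "Re (\<zeta> ^ n) = 0" by auto
  qed
  show thesis
    using that[of \<zeta>1 \<zeta>2 \<zeta>3] root[of \<zeta>1] root[of \<zeta>2] root[of \<zeta>3] T by auto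
qed

lemma holomorphic_critical_zero_cases:
  fixes H :: "complex \<Rightarrow> complex"
  assumes r: "r > 0" and H: "H holomorphic_on ball z0 r" "H z0 = 0"
    and H': "(H has_field_derivative 0) (at z0)"
  obtains "\<And>w. w \<in> ball z0 r \<Longrightarrow> H w = 0"
  | r1 \<phi> n where "0 < r1" "r1 \<le> r" "2 \<le> n" "\<phi> holomorphic_on ball z0 r1" "\<phi> z0 = 0"
      "deriv \<phi> z0 \<noteq> 0" "\<And>w. w \<in> ball z0 r1 \<Longrightarrow> H w = \<phi> w ^ n"
proof (cases "\<forall>n>0. (deriv ^^ n) H z0 = 0")
  case True
  have "H w = H z0" if "w \<in> ball z0 r" for w
    using holomorphic_fun_eq_const_on_connected[OF H(1) open_ball connected_ball _ _ that] True r
    by simp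
  with H(2) show thesis by (intro that(1)) auto
next
  case False
  define n where "n = (LEAST n. 0 < n \<and> (deriv ^^ n) H z0 \<noteq> 0)"
  have n: "0 < n" "(deriv ^^ n) H z0 \<noteq> 0"
    using LeastI_ex[of "\<lambda>n. 0 < n \<and> (deriv ^^ n) H z0 \<noteq> 0"] False unfolding n_def by auto
  have below: "(deriv ^^ i) H z0 = 0" if "0 < i" "i < n" for i
    using not_less_Least[of i "\<lambda>n. 0 < n \<and> (deriv ^^ n) H z0 \<noteq> 0"] that unfolding n_def by auto
  have "n \<noteq> 1" using n(2) DERIV_imp_deriv[OF H'] by auto
  with n(1) have n2: "2 \<le> n" by simp
  obtain g r' where r': "0 < r'" and g: "g holomorphic_on ball z0 r'"
    and factor: "\<And>w. w \<in> ball z0 r' \<Longrightarrow> H w - H z0 = ((w - z0) * g w) ^ n"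
    and g_nz: "\<And>w. w \<in> ball z0 r' \<Longrightarrow> g w \<noteq> 0"
    using holomorphic_factor_order_of_zero_strong[OF H(1) open_ball centre_in_ball[THEN iffD2, OF r] n below]
    by metis
  define r1 where "r1 = min r r'"
  have r1: "0 < r1" "r1 \<le> r" "ball z0 r1 \<subseteq> ball z0 r'" using r r' by (auto simp: r1_def)
  have z0: "z0 \<in> ball z0 r'" using r' by simp
  have "(g has_field_derivative deriv g z0) (at z0)"
    using g z0 by (meson DERIV_deriv_iff_field_differentiable holomorphic_on_imp_differentiable_at open_ball)
  from DERIV_mult[OF DERIV_diff[OF DERIV_ident DERIV_const[of z0]] this]
  have "((\<lambda>w. (w - z0) * g w) has_field_derivative g z0) (at z0)" by simp
  then have "deriv (\<lambda>w. (w - z0) * g w) z0 \<noteq> 0" using g_nz[OF z0] DERIV_imp_deriv by fastforce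
  moreover have "(\<lambda>w. (w - z0) * g w) holomorphic_on ball z0 r1"
    using holomorphic_on_subset[OF g r1(3)] by (intro holomorphic_intros)
  moreover have "H w = ((w - z0) * g w) ^ n" if "w \<in> ball z0 r1" for w
    using factor[of w] r1(3) that H(2) by auto
  ultimately show thesis
    by (intro that(2)[OF r1(1,2) n2]) simp_all
qed

lemma holomorphic_critical_zero_Re_triod:
  fixes H :: "complex \<Rightarrow> complex"
  assumes r: "r > 0" and H: "H holomorphic_on ball z0 r" "H z0 = 0"
    and H': "(H has_field_derivative 0) (at z0)"
  obtains S1 S2 S3 where "triod S1 S2 S3 z0" "S1 \<union> S2 \<union> S3 \<subseteq> ball z0 r"
    "\<And>w. w \<in> S1 \<union> S2 \<union> S3 \<Longrightarrow> Re (H w) = 0"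
proof -
  obtain B \<phi> n where B: "open B" "z0 \<in> B" "B \<subseteq> ball z0 r"
    and \<phi>: "continuous_on B \<phi>" "inj_on \<phi> B" "\<phi> z0 = 0" and n: "2 \<le> n"
    and Re_H: "\<And>w. w \<in> B \<Longrightarrow> Re (\<phi> w ^ n) = 0 \<Longrightarrow> Re (H w) = 0"
  proof (cases rule: holomorphic_critical_zero_cases[OF assms])
    case 1
    show thesis
      by (rule that[of "ball z0 r" "\<lambda>w. w - z0" 2]) (use r 1 in \<open>auto simp: inj_on_def continuous_on_diff\<close>)
  next
    case (2 r1 \<phi> n)
    obtain r2 where r2: "r2 > 0" "ball z0 r2 \<subseteq> ball z0 r1" "inj_on \<phi> (ball z0 r2)"
      using has_complex_derivative_locally_injective[OF 2(4) _ open_ball 2(6)] 2(1) by auto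
    have "continuous_on (ball z0 r2) \<phi>"
      using holomorphic_on_imp_continuous_on[OF 2(4)] r2(2) continuous_on_subset by blast
    then show thesis
      using that[of "ball z0 r2" \<phi> n] r2 2 by fastforce
  qed
  obtain \<zeta>1 \<zeta>2 \<zeta>3 where \<zeta>: "norm \<zeta>1 = 1" "norm \<zeta>2 = 1" "norm \<zeta>3 = 1" "\<zeta>1 \<noteq> \<zeta>2" "\<zeta>1 \<noteq> \<zeta>3" "\<zeta>2 \<noteq> \<zeta>3"
    and Re_\<zeta>: "Re (\<zeta>1 ^ n) = 0" "Re (\<zeta>2 ^ n) = 0" "Re (\<zeta>3 ^ n) = 0"
    using three_unit_vectors_power_Re_zero[OF n] by blast
  obtain d where "d > 0" and triod:
    "triod (B \<inter> \<phi> -` closed_segment 0 (d *\<^sub>R \<zeta>1)) (B \<inter> \<phi> -` closed_segment 0 (d *\<^sub>R \<zeta>2))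
      (B \<inter> \<phi> -` closed_segment 0 (d *\<^sub>R \<zeta>3)) z0"
    using inj_preimage_segments_triod[OF B(1,2) \<phi>] \<zeta> by metis
  have Re_zero: "Re (H w) = 0"
    if w: "w \<in> B \<inter> \<phi> -` closed_segment 0 (d *\<^sub>R \<zeta>)" and \<zeta>: "Re (\<zeta> ^ n) = 0" for w \<zeta>
  proof -
    obtain u where "\<phi> w = u *\<^sub>R (d *\<^sub>R \<zeta>)"
      using w by (auto simp: closed_segment_def)
    then have "\<phi> w = of_real (u * d) * \<zeta>" by (simp add: scaleR_conv_of_real)
    then have "Re (\<phi> w ^ n) = (u * d) ^ n * Re (\<zeta> ^ n)"
      by (simp add: power_mult_distrib flip: of_real_power)
    then show ?thesis using w \<zeta> Re_H by simp
  qed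
  show thesis
    by (rule that[OF triod]) (use B(3) Re_zero Re_\<zeta> in auto)
qed

lemma C1_on_imp_continuous_on: "C1_on S f \<Longrightarrow> continuous_on S f"
  unfolding C1_on_def by (meson continuous_at_imp_continuous_on differentiable_imp_continuous_within)

text \<open>\<open>Im (cnj a * b) = Re a * Im b - Im a * Re b\<close> is the determinant of the real matrix with
  columns \<open>a\<close> and \<open>b\<close>.\<close>
definition jacobian_det :: "(complex \<Rightarrow> complex) \<Rightarrow> complex \<Rightarrow> real" where
  "jacobian_det f z = Im (cnj (pderiv_dir f 1 z) * pderiv_dir f \<i> z)"

lemma Im_cnj_mult_eq_0_common_annihilator:
  fixes a b :: complex
  assumes "Im (cnj a * b) = 0"
  obtains \<beta> where "\<beta> \<noteq> 0" "Re (\<beta> * a) = 0" "Re (\<beta> * b) = 0"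
proof -
  consider "a \<noteq> 0" | "a = 0" "b \<noteq> 0" | "a = 0" "b = 0" by blast
  then show thesis
  proof cases
    case 1 then show thesis using assms by (intro that[of "\<i> * cnj a"]) auto
  next
    case 2 then show thesis by (intro that[of "\<i> * cnj b"]) auto
  next
    case 3 then show thesis by (intro that[of 1]) auto
  qed
qed

lemma injective_harmonic_jacobian_det_nonzero:
  assumes A: "open A" "z0 \<in> A" and f: "C2_on A f" and harmonic: "\<forall>w\<in>A. laplacian f w = 0"
    and inj: "inj_on f A"
  shows "jacobian_det f z0 \<noteq> 0"
proof
  assume "jacobian_det f z0 = 0"
  then obtain \<beta> where \<beta>: "\<beta> \<noteq> 0" "Re (\<beta> * pderiv_dir f 1 z0) = 0" "Re (\<beta> * pderiv_dir f \<i> z0) = 0"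
    unfolding jacobian_det_def by (rule Im_cnj_mult_eq_0_common_annihilator)
  obtain r H where r: "r > 0" "ball z0 r \<subseteq> A" and H: "H holomorphic_on ball z0 r" "H z0 = 0"
    "(H has_field_derivative
       of_real (Re (\<beta> * pderiv_dir f 1 z0)) - \<i> * of_real (Re (\<beta> * pderiv_dir f \<i> z0))) (at z0)"
    and Re_H: "\<And>w. w \<in> ball z0 r \<Longrightarrow> Re (H w) = Re (\<beta> * f w) - Re (\<beta> * f z0)"
    using harmonic_locally_Re_holomorphic[OF A f harmonic, where \<beta> = \<beta>] by blast
  have "(H has_field_derivative 0) (at z0)" using H(3) unfolding \<beta>(2,3) by simp
  then obtain S1 S2 S3 where T: "triod S1 S2 S3 z0" and sub: "S1 \<union> S2 \<union> S3 \<subseteq> ball z0 r"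
    and level: "\<And>w. w \<in> S1 \<union> S2 \<union> S3 \<Longrightarrow> Re (H w) = 0"
    using holomorphic_critical_zero_Re_triod[OF r(1) H(1,2)] by blast
  \<comment> \<open>\<open>Re (\<beta> * f)\<close> is constant on the triod, so \<open>Im (\<beta> * f)\<close> would embed it into the real line.\<close>
  have in_A: "w \<in> A" and level_f: "Re (\<beta> * f w) = Re (\<beta> * f z0)" if "w \<in> S1 \<union> S2 \<union> S3" for w
  proof -
    have "w \<in> ball z0 r" using that sub by blast
    then show "w \<in> A" "Re (\<beta> * f w) = Re (\<beta> * f z0)"
      using r(2) Re_H[of w] level[OF that] by auto
  qed
  have "inj_on (\<lambda>w. Im (\<beta> * f w)) (S1 \<union> S2 \<union> S3)"
  proof (rule inj_onI)
    fix a b assume ab: "a \<in> S1 \<union> S2 \<union> S3" "b \<in> S1 \<union> S2 \<union> S3" "Im (\<beta> * f a) = Im (\<beta> * f b)"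
    have "\<beta> * f a = \<beta> * f b"
      using level_f[OF ab(1)] level_f[OF ab(2)] ab(3) by (simp add: complex_eq_iff)
    then have "f a = f b" using \<beta>(1) by simp
    then show "a = b" using inj_onD[OF inj _ in_A[OF ab(1)] in_A[OF ab(2)]] by blast
  qed
  moreover have "continuous_on (S1 \<union> S2 \<union> S3) (\<lambda>w. Im (\<beta> * f w))"
    using continuous_on_subset[OF C1_on_imp_continuous_on[OF C2_on_imp_C1_on[OF f]]] in_A
    by (intro continuous_intros) blast
  ultimately show False using triod_not_inj_real[OF T] by blast
qed

text \<open>Cramer's rule for the inverse of \<open>h \<mapsto> Re h *\<^sub>R f\<^sub>x + Im h *\<^sub>R f\<^sub>y\<close>.\<close>
definition inverse_derivative :: "(complex \<Rightarrow> complex) \<Rightarrow> complex \<Rightarrow> complex \<Rightarrow> complex" where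
  "inverse_derivative f x w =
     of_real (Im (cnj w * pderiv_dir f \<i> x) / jacobian_det f x)
     + \<i> * of_real (Im (cnj (pderiv_dir f 1 x) * w) / jacobian_det f x)"

lemma inverse_derivative_inverse:
  assumes "jacobian_det f x \<noteq> 0"
  shows "Re (inverse_derivative f x w) *\<^sub>R pderiv_dir f 1 x + Im (inverse_derivative f x w) *\<^sub>R pderiv_dir f \<i> x = w"
proof -
  define a b where "a = pderiv_dir f 1 x" and "b = pderiv_dir f \<i> x"
  have J: "jacobian_det f x = Im (cnj a * b)" by (simp add: jacobian_det_def a_def b_def)
  have key: "Im (cnj w * b) *\<^sub>R a + Im (cnj a * w) *\<^sub>R b = Im (cnj a * b) *\<^sub>R w"
    by (simp add: complex_eq_iff algebra_simps)
  have "(Im (cnj w * b) / Im (cnj a * b)) *\<^sub>R a + (Im (cnj a * w) / Im (cnj a * b)) *\<^sub>R b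
      = (1 / Im (cnj a * b)) *\<^sub>R (Im (cnj w * b) *\<^sub>R a + Im (cnj a * w) *\<^sub>R b)"
    by (simp add: scaleR_add_right)
  also have "\<dots> = w" using assms J by (simp only: key) simp
  finally have "(Im (cnj w * b) / Im (cnj a * b)) *\<^sub>R a + (Im (cnj a * w) / Im (cnj a * b)) *\<^sub>R b = w" .
  then show ?thesis by (simp add: inverse_derivative_def J flip: a_def b_def)
qed

lemma has_derivative_inv_into:
  assumes A: "open A" "x \<in> A" and f: "inj_on f A" "continuous_on A f" "f differentiable (at x)"
    and J: "jacobian_det f x \<noteq> 0"
  shows "(inv_into A f has_derivative inverse_derivative f x) (at (f x))"
proof (rule has_derivative_inverse_strong[OF A f(2)])
  show "\<And>y. y \<in> A \<Longrightarrow> inv_into A f (f y) = y" using f(1) by simp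
  show "(f has_derivative (\<lambda>h. Re h *\<^sub>R pderiv_dir f 1 x + Im h *\<^sub>R pderiv_dir f \<i> x)) (at x)"
    by (rule has_derivative_pderiv_dir_coords[OF f(3)])
  show "(\<lambda>h. Re h *\<^sub>R pderiv_dir f 1 x + Im h *\<^sub>R pderiv_dir f \<i> x) \<circ> inverse_derivative f x = id"
    using inverse_derivative_inverse[OF J] by (simp add: fun_eq_iff)
qed

lemma diffeo_onto_image_if_jacobian_det_nonzero:
  assumes A: "open A" and f: "inj_on f A" "C1_on A f" and J: "\<And>x. x \<in> A \<Longrightarrow> jacobian_det f x \<noteq> 0"
  shows "diffeo_onto_image f A"
proof -
  define g where "g = inv_into A f"
  have cont: "continuous_on A f" by (rule C1_on_imp_continuous_on[OF f(2)])
  have diff: "f differentiable (at x)" if "x \<in> A" for x using f(2) that by (simp add: C1_on_def)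
  have g: "(g has_derivative inverse_derivative f x) (at (f x))" if "x \<in> A" for x
    unfolding g_def by (rule has_derivative_inv_into[OF A that f(1) cont diff[OF that] J[OF that]])
  have gf: "g (f x) = x" if "x \<in> A" for x using f(1) that by (simp add: g_def)
  have cont_g: "continuous_on (f ` A) g"
    using g by (auto intro!: continuous_at_imp_continuous_on dest: has_derivative_continuous)
  have cont_inv: "continuous_on A (\<lambda>x. inverse_derivative f x v)" for v
  proof -
    have "continuous_on A (pderiv_dir f 1)" "continuous_on A (pderiv_dir f \<i>)"
      using f(2) by (simp_all add: C1_on_def Basis_complex_def)
    moreover from this have "continuous_on A (jacobian_det f)"
      unfolding jacobian_det_def[abs_def] by (intro continuous_intros)
    ultimately show ?thesis
      unfolding inverse_derivative_def using J by (intro continuous_intros) auto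
  qed
  have "continuous_on (f ` A) (\<lambda>y. inverse_derivative f (g y) v)" for v
    by (rule continuous_on_compose2[OF cont_inv cont_g]) (auto simp: gf)
  moreover have "pderiv_dir g v y = inverse_derivative f (g y) v" if "y \<in> f ` A" for v y
    using that frechet_derivative_at[OF g] by (auto simp: pderiv_dir_def gf)
  ultimately have "continuous_on (f ` A) (pderiv_dir g v)" for v
    by (metis (no_types, lifting) continuous_on_eq)
  moreover have "g differentiable (at y)" if "y \<in> f ` A" for y
    using g that unfolding differentiable_def by blast
  ultimately show ?thesis
    unfolding diffeo_onto_image_def C1_on_def g_def[symmetric]
    using f invariance_of_domain[OF cont A f(1)] by (simp add: C1_on_def)
qed

lemma norm_tendsto_1_in_annuli:
  fixes c :: "nat \<Rightarrow> 'a::real_normed_vector"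
  assumes "\<And>n. 1 - inverse (real (Suc n)) / 2 < norm (c n)" "\<And>n. norm (c n) < 1"
  shows "(\<lambda>n. norm (c n)) \<longlonglongrightarrow> 1"
proof (rule tendsto_sandwich[OF always_eventually always_eventually _ tendsto_const])
  show "(\<lambda>n. 1 - inverse (real (Suc n)) / 2) \<longlonglongrightarrow> 1"
    using tendsto_diff[OF tendsto_const tendsto_divide[OF LIMSEQ_inverse_real_of_nat tendsto_const]]
    by simp
  show "\<forall>n. 1 - inverse (real (Suc n)) / 2 \<le> norm (c n)" "\<forall>n. norm (c n) \<le> 1"
    using assms by (simp_all add: less_imp_le)
qed

lemma local_homeo_at_eventually_eq:
  assumes "local_homeo_at f p" and x: "x \<longlonglongrightarrow> p" "\<And>n. x n \<in> cball 0 1"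
    and y: "y \<longlonglongrightarrow> p" "\<And>n. y n \<in> cball 0 1" and eq: "\<And>n. f (x n) = f (y n)"
  shows "eventually (\<lambda>n. x n = y n) sequentially"
proof -
  obtain G where G: "open G" "p \<in> G" "inj_on f (G \<inter> cball 0 1)"
    using assms(1) unfolding local_homeo_at_def by blast
  have "eventually (\<lambda>n. x n \<in> G \<and> y n \<in> G) sequentially"
    using topological_tendstoD[OF x(1) G(1,2)] topological_tendstoD[OF y(1) G(1,2)] by (rule eventually_conj)
  then show ?thesis
    by (rule eventually_mono) (use inj_onD[OF G(3) eq] x(2) y(2) in blast)
qed

lemma inj_on_annulus_if_locally_injective_on_sphere:
  fixes f :: "complex \<Rightarrow> complex"
  assumes cont: "continuous_on (cball 0 1) f" and inj: "inj_on f (sphere 0 1)"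
    and local_inj: "\<forall>P\<in>sphere 0 1. local_homeo_at f P"
  obtains \<rho> where "0 < \<rho>" "\<rho> < 1" "inj_on f (ball 0 1 - cball 0 \<rho>)"
proof (rule ccontr)
  assume no_annulus: "\<not> thesis"
  define \<rho> where "\<rho> n = 1 - inverse (real (Suc n)) / 2" for n
  have "0 < \<rho> n" "\<rho> n < 1" for n
    using inverse_le_1_iff[of "real (Suc n)"] by (simp_all add: \<rho>_def)
  then have "\<not> inj_on f (ball 0 1 - cball 0 (\<rho> n))" for n using no_annulus that by blast
  then have "\<forall>n. \<exists>a b. a \<in> ball 0 1 - cball 0 (\<rho> n) \<and> b \<in> ball 0 1 - cball 0 (\<rho> n) \<and> f a = f b \<and> a \<noteq> b"
    unfolding inj_on_def by blast
  then obtain a b where ab: "\<And>n. a n \<in> ball 0 1 - cball 0 (\<rho> n)" "\<And>n. b n \<in> ball 0 1 - cball 0 (\<rho> n)"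
    "\<And>n. f (a n) = f (b n)" "\<And>n. a n \<noteq> b n"
    by metis
  have in_cball: "a n \<in> cball 0 1" "b n \<in> cball 0 1" for n
    using ab(1)[of n] ab(2)[of n] by auto
  have "seq_compact (cball (0::complex) 1 \<times> cball (0::complex) 1)"
    by (intro compact_imp_seq_compact compact_Times) simp_all
  then obtain l \<sigma> where \<sigma>: "strict_mono \<sigma>" and lim: "((\<lambda>n. (a n, b n)) \<circ> \<sigma>) \<longlonglongrightarrow> l"
    using seq_compactE[of _ "\<lambda>n. (a n, b n)"] in_cball by blast
  obtain p q where "l = (p, q)" by (cases l)
  with lim have lim_a: "(\<lambda>n. a (\<sigma> n)) \<longlonglongrightarrow> p" and lim_b: "(\<lambda>n. b (\<sigma> n)) \<longlonglongrightarrow> q"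
    using tendsto_fst[OF lim] tendsto_snd[OF lim] by (simp_all add: o_def)
  have on_sphere: "l \<in> sphere 0 1"
    if lim_c: "(\<lambda>n. c (\<sigma> n)) \<longlonglongrightarrow> l" and c: "\<And>n. c n \<in> ball 0 1 - cball 0 (\<rho> n)"
    for c :: "nat \<Rightarrow> complex" and l
  proof -
    have "1 - inverse (real (Suc n)) / 2 < norm (c n)" "norm (c n) < 1" for n
      using c[of n] by (auto simp: \<rho>_def)
    then have "(\<lambda>n. norm (c n)) \<longlonglongrightarrow> 1" by (rule norm_tendsto_1_in_annuli)
    from LIMSEQ_subseq_LIMSEQ[OF this \<sigma>] have "(\<lambda>n. norm (c (\<sigma> n))) \<longlonglongrightarrow> 1"
      by (simp add: o_def)
    moreover have "(\<lambda>n. norm (c (\<sigma> n))) \<longlonglongrightarrow> norm l"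
      using tendsto_norm[OF lim_c] .
    ultimately show ?thesis using LIMSEQ_unique by force
  qed
  have p: "p \<in> sphere 0 1" and q: "q \<in> sphere 0 1"
    using on_sphere[OF lim_a ab(1)] on_sphere[OF lim_b ab(2)] by simp_all
  have "(\<lambda>n. f (a (\<sigma> n))) \<longlonglongrightarrow> f p" "(\<lambda>n. f (b (\<sigma> n))) \<longlonglongrightarrow> f q"
    using continuous_on_tendsto_compose[OF cont lim_a] continuous_on_tendsto_compose[OF cont lim_b]
      p q in_cball by auto
  then have "f p = f q" using ab(3) LIMSEQ_unique by force
  then have "p = q" using inj p q by (meson inj_onD)
  have "eventually (\<lambda>n. a (\<sigma> n) = b (\<sigma> n)) sequentially"
    using local_inj p lim_b unfolding \<open>p = q\<close>[symmetric]
    by (intro local_homeo_at_eventually_eq[OF _ lim_a in_cball(1) _ in_cball(2) ab(3)]) auto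
  then show False using ab(4) by (auto dest: eventually_happens)
qed

theorem lemma4p1:
  fixes \<Phi> U :: "complex \<Rightarrow> complex" and \<gamma> :: "complex set"
  assumes "\<exists>\<Psi>. homeomorphism (sphere 0 1) \<gamma> \<Phi> \<Psi>"
    and "\<exists>c. simple_path c \<and> pathfinish c = pathstart c \<and> path_image c = \<gamma>"
    and "C2_on (ball 0 1) U"
    and "continuous_on (cball 0 1) U"
    and "\<forall>x\<in>ball 0 1. laplacian U x = 0"
    and "\<forall>z\<in>sphere 0 1. U z = \<Phi> z"
    and "\<forall>P\<in>sphere 0 1. local_homeo_at U P"
  shows "\<exists>\<rho>. 0 < \<rho> \<and> \<rho> < 1 \<and> diffeo_onto_image U (ball 0 1 - cball 0 \<rho>)"
proof -
  obtain \<Psi> where \<Psi>: "homeomorphism (sphere 0 1) \<gamma> \<Phi> \<Psi>" using assms(1) by blast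
  have "inj_on U (sphere 0 1)"
  proof (rule inj_onI)
    fix z w assume "z \<in> sphere 0 1" "w \<in> sphere 0 1" "U z = U w"
    then show "z = w" using assms(6) homeomorphism_apply1[OF \<Psi>] by metis
  qed
  then obtain \<rho> where \<rho>: "0 < \<rho>" "\<rho> < 1" and inj: "inj_on U (ball 0 1 - cball 0 \<rho>)"
    by (rule inj_on_annulus_if_locally_injective_on_sphere[OF assms(4) _ assms(7)])
  define A where "A = ball (0::complex) 1 - cball 0 \<rho>"
  have A: "open A" "A \<subseteq> ball 0 1" by (auto simp: A_def)
  have C2: "C2_on A U" by (rule C2_on_subset[OF assms(3) A(2)])
  have harmonic: "\<forall>x\<in>A. laplacian U x = 0" using assms(5) A(2) by blast
  have inj_A: "inj_on U A" using inj by (simp add: A_def)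
  have "jacobian_det U x \<noteq> 0" if "x \<in> A" for x
    by (rule injective_harmonic_jacobian_det_nonzero[OF A(1) that C2 harmonic inj_A])
  then have "diffeo_onto_image U A"
    by (rule diffeo_onto_image_if_jacobian_det_nonzero[OF A(1) inj_A C2_on_imp_C1_on[OF C2]])
  with \<rho> show ?thesis unfolding A_def by blast
qed

end
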